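(* Let $p$ be an odd prime and $m$ a positive integer not divisible by $p$. Then for every $r\in\mathbb Z$, $$\sum_{\substack{k=1\\ k\equiv r\ (\mathrm{mod}\ m)}}^{p-1}\frac1k\equiv\frac1m\Big(B_{p-1}\Big(\Big\{\frac rm\Big\}\Big)-B_{p-1}\Big(\Big\{\frac{r-p}m\Big\}\Big)\Big)\pmod p.$$
   Context: $\{x\}$ denotes the fractional part of a real number $x$; $B_n(x)$ is the $n$th Bernoulli polynomial. Congruences modulo $p$ are between rational numbers whose denominators are prime to $p$. *)

theory Defs
  imports Complex_Main "HOL-Number_Theory.Number_Theory"
begin

text \<open>Bernoulli numbers (convention B_1 = -1/2), via the standard recurrence
  sum_{k=0}^{n} (n+1 choose k) B_k = 0 for n >= 1, B_0 = 1.\<close>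
function bernoulli :: "nat \<Rightarrow> rat" where
  "bernoulli n = (if n = 0 then 1
     else - (\<Sum>k<n. of_nat ((n + 1) choose k) * bernoulli k) / of_nat (n + 1))"
  by auto
termination by (relation "measure id") auto

declare bernoulli.simps [simp del]

definition bernpoly :: "nat \<Rightarrow> rat \<Rightarrow> rat" where
  "bernpoly n x = (\<Sum>k\<le>n. of_nat (n choose k) * bernoulli k * x ^ (n - k))"

definition p_integral :: "nat \<Rightarrow> rat \<Rightarrow> bool" where
  "p_integral p q \<longleftrightarrow> coprime (snd (quotient_of q)) (int p)"

definition qcong :: "rat \<Rightarrow> rat \<Rightarrow> nat \<Rightarrow> bool" where
  "qcong a b p \<longleftrightarrow> p_integral p a \<and> p_integral p b \<and> p_integral p ((a - b) / of_nat p)"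

end

theory Submission
  imports Defs
begin

text \<open>
  Put \<open>\<phi> t = r/m - \<lfloor>(r - t)/m\<rfloor>\<close>. As \<open>t\<close> runs from \<open>0\<close> to \<open>p\<close>, the
  value \<open>\<phi> t\<close> grows by \<open>1\<close> exactly when \<open>t \<equiv> r (mod m)\<close>, and then
  \<open>\<phi> t = t/m\<close>. Since \<open>B\<^sub>n (x + 1) - B\<^sub>n x = n x\<^sup>n\<^sup>-\<^sup>1\<close>, telescoping
  \<open>B\<^sub>p\<^sub>-\<^sub>1 (\<phi> t)\<close> expresses \<open>(p - 1) \<Sum> (k/m)\<^sup>p\<^sup>-\<^sup>2\<close> over the residue class
  as \<open>B\<^sub>p\<^sub>-\<^sub>1 ({(r - p)/m} + p/m) - B\<^sub>p\<^sub>-\<^sub>1 {r/m}\<close>.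
  Modulo \<open>p\<close>, Fermat gives \<open>1/k \<equiv> k\<^sup>p\<^sup>-\<^sup>2\<close> and \<open>m\<^sup>p\<^sup>-\<^sup>2 \<equiv> 1/m\<close>, further
  \<open>1/(p - 1) \<equiv> -1\<close>, and the shift by \<open>p/m\<close> can be dropped because the difference
  \<open>B\<^sub>p\<^sub>-\<^sub>1 x - B\<^sub>p\<^sub>-\<^sub>1 y\<close> only involves the \<open>p\<close>-integral \<open>B\<^sub>k\<close> with \<open>k < p - 1\<close>.
\<close>

lemma p_integral_iff:
  "p_integral p q \<longleftrightarrow> (\<exists>a b. b \<noteq> 0 \<and> coprime b (int p) \<and> q = of_int a / of_int b)"
proof
  assume "p_integral p q"
  then show "\<exists>a b. b \<noteq> 0 \<and> coprime b (int p) \<and> q = of_int a / of_int b"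
    unfolding p_integral_def
    by (metis less_irrefl prod.collapse quotient_of_denom_pos' quotient_of_div)
next
  assume "\<exists>a b. b \<noteq> 0 \<and> coprime b (int p) \<and> q = of_int a / of_int b"
  then obtain a b where ab: "b \<noteq> 0" "coprime b (int p)" "q = of_int a / of_int b"
    by blast
  obtain a' b' where q: "quotient_of q = (a', b')"
    by (cases "quotient_of q")
  have "q = of_int a' / of_int b'" "b' > 0" "coprime a' b'"
    using quotient_of_div[OF q] quotient_of_denom_pos[OF q] quotient_of_coprime[OF q] .
  with ab have "a' * b = a * b'"
    by (simp add: field_simps flip: of_int_mult of_int_eq_iff)
  then have "b' dvd b"
    using \<open>coprime a' b'\<close> by (metis coprime_commute coprime_dvd_mult_right_iff dvd_triv_right)
  with ab(2) have "coprime b' (int p)"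
    by (metis coprime_commute coprime_mult_right_iff dvd_def)
  then show "p_integral p q"
    unfolding p_integral_def q by simp
qed

lemma p_integral_of_int [simp]: "p_integral p (of_int a)"
  unfolding p_integral_iff by (rule exI[of _ a], rule exI[of _ 1]) simp

lemma p_integral_of_nat [simp]: "p_integral p (of_nat a)"
  using p_integral_of_int[of p "int a"] by simp

lemma p_integral_0 [simp]: "p_integral p 0" and p_integral_1 [simp]: "p_integral p 1"
  using p_integral_of_int[of p 0] p_integral_of_int[of p 1] by simp_all

lemma p_integral_divide_of_nat:
  assumes "prime p" "\<not> p dvd b"
  shows "p_integral p (of_int a / of_nat b)"
proof -
  have "coprime (int b) (int p)"
    using prime_imp_coprime[OF assms] by (simp add: ac_simps)
  moreover have "int b \<noteq> 0"
    using assms(2) by (metis dvd_0_right of_nat_eq_0_iff)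
  ultimately show ?thesis
    unfolding p_integral_iff by (intro exI[of _ a] exI[of _ "int b"]) simp
qed

lemma p_integral_add:
  assumes "p_integral p x" "p_integral p y"
  shows "p_integral p (x + y)"
proof -
  from assms obtain a b c d where "b \<noteq> 0" "coprime b (int p)" "x = of_int a / of_int b"
    "d \<noteq> 0" "coprime d (int p)" "y = of_int c / of_int d"
    unfolding p_integral_iff by blast
  then have "b * d \<noteq> 0 \<and> coprime (b * d) (int p) \<and>
      x + y = of_int (a * d + c * b) / of_int (b * d)"
    by (simp add: field_simps)
  then show ?thesis
    unfolding p_integral_iff by blast
qed

lemma p_integral_mult:
  assumes "p_integral p x" "p_integral p y"
  shows "p_integral p (x * y)"
proof -
  from assms obtain a b c d where "b \<noteq> 0" "coprime b (int p)" "x = of_int a / of_int b"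
    "d \<noteq> 0" "coprime d (int p)" "y = of_int c / of_int d"
    unfolding p_integral_iff by blast
  then have "b * d \<noteq> 0 \<and> coprime (b * d) (int p) \<and>
      x * y = of_int (a * c) / of_int (b * d)"
    by simp
  then show ?thesis
    unfolding p_integral_iff by blast
qed

lemma p_integral_uminus: "p_integral p x \<Longrightarrow> p_integral p (- x)"
  using p_integral_mult[OF p_integral_of_int[of p "- 1"], of x] by simp

lemma p_integral_diff: "p_integral p x \<Longrightarrow> p_integral p y \<Longrightarrow> p_integral p (x - y)"
  using p_integral_add[of p x "- y"] p_integral_uminus[of p y] by simp

lemma p_integral_power: "p_integral p x \<Longrightarrow> p_integral p (x ^ n)"
  by (induction n) (simp_all add: p_integral_mult)

lemma p_integral_sum:
  "(\<And>i. i \<in> A \<Longrightarrow> p_integral p (f i)) \<Longrightarrow> p_integral p (sum f A)"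
  by (induction A rule: infinite_finite_induct) (simp_all add: p_integral_add)

lemma p_integral_frac: "p_integral p x \<Longrightarrow> p_integral p (frac x)"
  unfolding frac_def by (simp add: p_integral_diff)

lemma qcong_refl: "p_integral p a \<Longrightarrow> qcong a a p"
  unfolding qcong_def by simp

lemma qcong_sym:
  assumes "qcong a b p"
  shows "qcong b a p"
proof -
  have "(b - a) / of_nat p = - ((a - b) / of_nat p)"
    by (cases "p = 0") (simp_all add: field_simps)
  then show ?thesis
    using assms unfolding qcong_def by (metis p_integral_uminus)
qed

lemma qcong_trans [trans]:
  assumes "qcong a b p" "qcong b c p"
  shows "qcong a c p"
proof -
  have "(a - c) / of_nat p = (a - b) / of_nat p + (b - c) / of_nat p"
    by (simp add: diff_divide_distrib)
  then show ?thesis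
    using assms unfolding qcong_def by (metis p_integral_add)
qed

lemma qcong_add:
  assumes "qcong a b p" "qcong c d p"
  shows "qcong (a + c) (b + d) p"
proof -
  have "(a + c - (b + d)) / of_nat p = (a - b) / of_nat p + (c - d) / of_nat p"
    by (cases "p = 0") (simp_all add: field_simps)
  then show ?thesis
    using assms unfolding qcong_def by (metis p_integral_add)
qed

lemma qcong_diff:
  assumes "qcong a b p" "qcong c d p"
  shows "qcong (a - c) (b - d) p"
proof -
  have "(a - c - (b - d)) / of_nat p = (a - b) / of_nat p - (c - d) / of_nat p"
    by (cases "p = 0") (simp_all add: field_simps)
  then show ?thesis
    using assms unfolding qcong_def by (metis p_integral_diff)
qed

lemma qcong_mult:
  assumes "qcong a b p" "qcong c d p"
  shows "qcong (a * c) (b * d) p"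
proof -
  have "(a * c - b * d) / of_nat p = a * ((c - d) / of_nat p) + d * ((a - b) / of_nat p)"
    by (cases "p = 0") (simp_all add: field_simps)
  then show ?thesis
    using assms unfolding qcong_def by (metis p_integral_add p_integral_mult)
qed

lemma qcong_power: "qcong a b p \<Longrightarrow> qcong (a ^ n) (b ^ n) p"
  by (induction n) (simp_all add: qcong_mult qcong_refl)

lemma qcong_sum:
  "(\<And>i. i \<in> A \<Longrightarrow> qcong (f i) (g i) p) \<Longrightarrow> qcong (sum f A) (sum g A) p"
  by (induction A rule: infinite_finite_induct) (simp_all add: qcong_refl qcong_add)

lemma qcong_add_multiple:
  assumes "p_integral p x" "p_integral p y"
  shows "qcong (x + of_nat p * y) x p"
  using assms unfolding qcong_def
  by (cases "p = 0") (simp_all add: p_integral_add p_integral_mult)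

lemma qcong_inverse_power:
  assumes p: "prime p" and k: "\<not> p dvd k"
  shows "qcong (1 / of_nat k) (of_nat k ^ (p - 2)) p"
proof -
  have "int p dvd int k ^ (p - 1) - 1"
    using fermat_theorem[OF assms] by (simp add: cong_iff_dvd_diff flip: cong_int_iff)
  then obtain q where "int k ^ (p - 1) - 1 = int p * q"
    by (elim dvdE)
  then have q: "(of_nat k :: rat) ^ (p - 1) = 1 + of_nat p * of_int q"
    by (metis add.commute diff_add_cancel of_int_add of_int_mult of_int_of_nat_eq
        of_int_power of_int_1)
  have "k \<noteq> 0" "p \<noteq> 0"
    using k p by (metis dvd_0_right, metis not_prime_0)
  have "(of_nat k :: rat) ^ (p - 1) = of_nat k ^ (p - 2) * of_nat k"
    using prime_ge_2_nat[OF p] by (simp flip: power_Suc2 add: Suc_diff_Suc numeral_2_eq_2)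
  then have "1 / of_nat k - of_nat k ^ (p - 2) = (1 - of_nat k ^ (p - 1)) / (of_nat k :: rat)"
    using \<open>k \<noteq> 0\<close> by (simp add: diff_divide_distrib)
  also have "\<dots> = of_nat p * (of_int (- q) / of_nat k)"
    unfolding q by simp
  finally have "(1 / of_nat k - of_nat k ^ (p - 2)) / of_nat p = (of_int (- q) / of_nat k :: rat)"
    using \<open>p \<noteq> 0\<close> by simp
  then show ?thesis
    unfolding qcong_def
    using p_integral_divide_of_nat[OF assms, of 1] p_integral_divide_of_nat[OF assms, of "- q"]
    by (simp add: p_integral_power)
qed

lemma qcong_inverse_pred:
  assumes p: "prime p"
  shows "qcong (1 / of_nat (p - 1)) (- 1) p"
proof -
  have "\<not> p dvd p - 1"
    using prime_gt_1_nat[OF p] by (auto dest: dvd_imp_le)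
  then have "p_integral p (1 / of_nat (p - 1))"
    using p_integral_divide_of_nat[OF p, of "p - 1" 1] by simp
  moreover have "(1 / of_nat (p - 1) - (- 1)) / of_nat p = (1 / of_nat (p - 1) :: rat)"
  proof -
    have "(of_nat (p - 1) :: rat) = of_nat p - 1" "(of_nat p :: rat) - 1 \<noteq> 0"
      "(of_nat p :: rat) \<noteq> 0"
      using prime_gt_1_nat[OF p] by (simp_all add: of_nat_diff)
    then show ?thesis
      by (simp add: field_simps)
  qed
  ultimately show ?thesis
    unfolding qcong_def using p_integral_uminus[OF p_integral_1] by presburger
qed

lemma bernoulli_0 [simp]: "bernoulli 0 = 1"
  by (simp add: bernoulli.simps)

lemma sum_choose_bernoulli:
  "(\<Sum>k\<le>n. of_nat (n choose k) * bernoulli k) = bernoulli n + of_bool (n = 1)"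
proof (cases "n \<ge> 2")
  case True
  then obtain j where n: "n = Suc j" "j > 0"
    by (cases n) auto
  have "bernoulli j = - (\<Sum>k<j. of_nat (Suc j choose k) * bernoulli k) / of_nat (Suc j)"
    using n(2) by (simp add: bernoulli.simps[of j])
  then have "(\<Sum>k<j. of_nat (Suc j choose k) * bernoulli k) + of_nat (Suc j) * bernoulli j = 0"
    by (simp add: field_simps)
  then show ?thesis
    using n by (simp add: lessThan_Suc_atMost[symmetric])
next
  case False
  then have "n = 0 \<or> n = 1"
    by auto
  then show ?thesis
    by auto
qed

lemma p_integral_bernoulli:
  assumes p: "prime p"
  shows "k + 1 < p \<Longrightarrow> p_integral p (bernoulli k)"
proof (induction k rule: less_induct)
  case (less k)
  have "\<not> p dvd k + 1"
    using less.prems by (auto dest: dvd_imp_le)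
  then have "p_integral p (of_int (- 1) / of_nat (k + 1))"
    by (rule p_integral_divide_of_nat[OF p])
  moreover have "p_integral p (\<Sum>i<k. of_nat (Suc k choose i) * bernoulli i)"
    using less by (intro p_integral_sum p_integral_mult p_integral_of_nat) auto
  ultimately have
    "p_integral p (- (\<Sum>i<k. of_nat (Suc k choose i) * bernoulli i) / of_nat (Suc k))"
    using p_integral_mult by fastforce
  then show ?case
    by (simp add: bernoulli.simps[of k])
qed

lemma bernpoly_reflected:
  "bernpoly n x = (\<Sum>i\<le>n. of_nat (n choose i) * bernoulli (n - i) * x ^ i)"
  unfolding bernpoly_def
  by (rule sum.reindex_bij_witness[where i="\<lambda>k. n - k" and j="\<lambda>k. n - k"])
     (auto simp: binomial_symmetric[symmetric])

lemma sum_atMost_triangle_swap: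
  fixes f :: "nat \<Rightarrow> nat \<Rightarrow> 'a::comm_monoid_add"
  shows "(\<Sum>k\<le>n. \<Sum>i\<le>n - k. f k i) = (\<Sum>i\<le>n. \<Sum>k\<le>n - i. f k i)"
proof -
  have "(\<Sum>k\<le>n. \<Sum>i\<le>n - k. f k i) =
      (\<Sum>k\<le>n. \<Sum>i | i \<in> {..n} \<and> k + i \<le> n. f k i)"
    by (intro sum.cong refl) auto
  also have "\<dots> = (\<Sum>i\<le>n. \<Sum>k | k \<in> {..n} \<and> k + i \<le> n. f k i)"
    by (rule sum.swap_restrict) simp_all
  also have "\<dots> = (\<Sum>i\<le>n. \<Sum>k\<le>n - i. f k i)"
    by (intro sum.cong refl) auto
  finally show ?thesis .
qed

lemma choose_mult_choose_swap:
  "k + i \<le> n \<Longrightarrow> (n choose k) * ((n - k) choose i) = (n choose i) * ((n - i) choose k)"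
  using choose_mult[of k "k + i" n] choose_mult[of i "k + i" n] binomial_symmetric[of k "k + i"]
  by simp

lemma bernpoly_plus_one: "bernpoly n (x + 1) = bernpoly n x + of_nat n * x ^ (n - 1)"
proof -
  have "bernpoly n (x + 1) =
      (\<Sum>k\<le>n. \<Sum>i\<le>n - k.
        of_nat (n choose k) * bernoulli k * (of_nat ((n - k) choose i) * x ^ i))"
    unfolding bernpoly_def by (intro sum.cong refl) (simp add: binomial_ring[of x 1] sum_distrib_left)
  also have "\<dots> = (\<Sum>i\<le>n. \<Sum>k\<le>n - i.
      of_nat (n choose i) * x ^ i * (of_nat ((n - i) choose k) * bernoulli k))"
  proof (subst sum_atMost_triangle_swap, intro sum.cong refl)
    fix i k
    assume "i \<in> {..n}" "k \<in> {..n - i}"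
    then have "(n choose k) * ((n - k) choose i) = (n choose i) * ((n - i) choose k)"
      by (intro choose_mult_choose_swap) auto
    then have "of_nat (n choose k) * of_nat ((n - k) choose i) =
        (of_nat (n choose i) * of_nat ((n - i) choose k) :: rat)"
      by (metis of_nat_mult)
    then show "of_nat (n choose k) * bernoulli k * (of_nat ((n - k) choose i) * x ^ i) =
        of_nat (n choose i) * x ^ i * (of_nat ((n - i) choose k) * bernoulli k)"
      by (simp only: mult_ac)
  qed
  also have "\<dots> =
      (\<Sum>i\<le>n. of_nat (n choose i) * x ^ i * (bernoulli (n - i) + of_bool (n - i = 1)))"
    by (simp add: sum_choose_bernoulli flip: sum_distrib_left)
  also have "\<dots> = bernpoly n x + (\<Sum>i\<le>n. of_nat (n choose i) * x ^ i * of_bool (n - i = 1))"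
    unfolding bernpoly_reflected by (simp add: distrib_left sum.distrib mult_ac)
  also have "(\<Sum>i\<le>n. of_nat (n choose i) * x ^ i * of_bool (n - i = 1)) = of_nat n * x ^ (n - 1)"
  proof (cases n)
    case (Suc j)
    then have "(\<Sum>i\<le>n. of_nat (n choose i) * x ^ i * of_bool (n - i = 1))
        = (\<Sum>i\<le>n. if i = j then of_nat (n choose j) * x ^ j else 0)"
      by (intro sum.cong) auto
    then show ?thesis
      using Suc by simp
  qed simp
  finally show ?thesis .
qed

lemma bernpoly_diff:
  "bernpoly n x - bernpoly n y =
    (\<Sum>k<n. of_nat (n choose k) * bernoulli k * (x ^ (n - k) - y ^ (n - k)))"
  by (simp add: bernpoly_def lessThan_Suc_atMost[symmetric] right_diff_distrib flip: sum_subtractf)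

text \<open>
  Values \<open>bernpoly n x\<close> themselves need not be \<open>p\<close>-integral (the denominator of
  \<open>bernoulli (p - 1)\<close> contains \<open>p\<close>); in a difference the constant term cancels.
\<close>

lemma qcong_bernpoly_diff:
  assumes "prime p" "n < p" "qcong x x' p" "qcong y y' p"
  shows "qcong (bernpoly n x - bernpoly n y) (bernpoly n x' - bernpoly n y') p"
  unfolding bernpoly_diff
proof (intro qcong_sum qcong_mult qcong_diff qcong_power qcong_refl p_integral_of_nat assms(3,4))
  fix k
  assume "k \<in> {..<n}"
  then show "p_integral p (bernoulli k)"
    using assms(1,2) by (intro p_integral_bernoulli) auto
qed

lemma diff_one_div_eq:
  fixes z m :: int
  assumes "m > 0"
  shows "(z - 1) div m = z div m - of_bool (m dvd z)"
proof (cases "m dvd z")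
  case True
  then obtain q where "z = m * q"
    by (elim dvdE)
  then show ?thesis
    using assms by (intro int_div_pos_eq[of _ m _ "m - 1"]) (simp_all add: algebra_simps)
next
  case False
  then have "0 < z mod m"
    using pos_mod_sign[OF assms, of z] by (simp add: dvd_eq_mod_eq_0 order_less_le)
  moreover have "z mod m < m" "z - 1 = m * (z div m) + (z mod m - 1)"
    using assms by (simp_all add: algebra_simps)
  ultimately show ?thesis
    using False by (intro int_div_pos_eq[of _ m _ "z mod m - 1"]) simp_all
qed

lemma floor_residue_step:
  fixes m t :: nat and r :: int
  assumes "m > 0"
  shows "\<lfloor>(of_int r - of_nat (Suc t)) / (of_nat m :: 'a :: floor_ceiling)\<rfloor> =
         \<lfloor>(of_int r - of_nat t) / (of_nat m :: 'a)\<rfloor> - of_bool ([int t = r] (mod int m))"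
proof -
  have "(of_int r - of_nat (Suc t)) / (of_nat m :: 'a) = of_int (r - int t - 1) / of_int (int m)"
    "(of_int r - of_nat t) / (of_nat m :: 'a) = of_int (r - int t) / of_int (int m)"
    by simp_all
  moreover have "[int t = r] (mod int m) \<longleftrightarrow> int m dvd r - int t"
    by (simp add: cong_iff_dvd_diff dvd_diff_commute)
  ultimately show ?thesis
    using assms by (simp only: floor_divide_of_int_eq diff_one_div_eq of_nat_0_less_iff)
qed

lemma floor_residue_class:
  fixes m t :: nat and r :: int
  assumes "[int t = r] (mod int m)" "m > 0"
  shows "of_int r / of_nat m - of_int \<lfloor>(of_int r - of_nat t) / (of_nat m :: 'a)\<rfloor> =
         (of_nat t / of_nat m :: 'a :: floor_ceiling)"
proof -
  obtain q where "r - int t = int m * q"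
    using assms(1) by (metis cong_iff_dvd_diff cong_sym dvdE)
  then have "r = int t + int m * q"
    by simp
  then have r: "(of_int r :: 'a) = of_nat t + of_nat m * of_int q"
    by simp
  have floor: "\<lfloor>(of_int r - of_nat t) / (of_nat m :: 'a)\<rfloor> = q"
    using assms(2) by (simp add: r)
  show ?thesis
    unfolding floor using assms(2) by (simp add: r field_simps)
qed

lemma bernpoly_power_sum_residue_class:
  fixes m N n :: nat and r :: int
  assumes "m > 0"
  shows "of_nat n * (\<Sum>t\<in>{t\<in>{..<N}. [int t = r] (mod int m)}. (of_nat t / of_nat m) ^ (n - 1))
         = bernpoly n (frac ((of_int r - of_nat N) / of_nat m) + of_nat N / of_nat m)
         - bernpoly n (frac (of_int r / of_nat m))"
proof -
  define \<phi> :: "nat \<Rightarrow> rat"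
    where "\<phi> s = of_int r / of_nat m - of_int \<lfloor>(of_int r - of_nat s) / (of_nat m :: rat)\<rfloor>" for s
  have step: "bernpoly n (\<phi> (Suc t)) - bernpoly n (\<phi> t) =
      (if [int t = r] (mod int m) then of_nat n * (of_nat t / of_nat m) ^ (n - 1) else 0)" for t
  proof (cases "[int t = r] (mod int m)")
    case True
    then have "\<phi> t = of_nat t / of_nat m" "\<phi> (Suc t) = \<phi> t + 1"
      using floor_residue_class[where 'a = rat, OF True assms]
        floor_residue_step[where 'a = rat, OF assms, of r t]
      unfolding \<phi>_def by simp_all
    then show ?thesis
      using True by (simp add: bernpoly_plus_one)
  next
    case False
    then show ?thesis
      using floor_residue_step[where 'a = rat, OF assms, of r t] unfolding \<phi>_def by simp
  qed
  have "of_nat n * (\<Sum>t\<in>{t\<in>{..<N}. [int t = r] (mod int m)}. (of_nat t / of_nat m) ^ (n - 1)) =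
      (\<Sum>t<N. bernpoly n (\<phi> (Suc t)) - bernpoly n (\<phi> t))"
    unfolding step sum_distrib_left by (rule sum.inter_filter) simp
  also have "\<dots> = bernpoly n (\<phi> N) - bernpoly n (\<phi> 0)"
    by (rule sum_lessThan_telescope)
  also have "\<phi> N = frac ((of_int r - of_nat N) / of_nat m) + of_nat N / of_nat m"
    unfolding \<phi>_def frac_def using assms by (simp add: diff_divide_distrib)
  also have "\<phi> 0 = frac (of_int r / of_nat m)"
    unfolding \<phi>_def frac_def by simp
  finally show ?thesis .
qed

lemma bernpoly_power_sum_residue_class_from_1:
  fixes m N n :: nat and r :: int
  assumes "m > 0" "n \<ge> 2"
  shows "of_nat n * (\<Sum>k\<in>{k\<in>{1..N-1}. [int k = r] (mod int m)}. (of_nat k / of_nat m) ^ (n - 1))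
         = bernpoly n (frac ((of_int r - of_nat N) / of_nat m) + of_nat N / of_nat m)
         - bernpoly n (frac (of_int r / of_nat m))"
proof -
  have "(\<Sum>k\<in>{k\<in>{1..N-1}. [int k = r] (mod int m)}. (of_nat k / of_nat m :: rat) ^ (n - 1)) =
      (\<Sum>t\<in>{t\<in>{..<N}. [int t = r] (mod int m)}. (of_nat t / of_nat m) ^ (n - 1))"
    using assms(2) by (intro sum.mono_neutral_left) auto
  then show ?thesis
    using bernpoly_power_sum_residue_class[OF assms(1)] by simp
qed

lemma p_integral_frac_divide_of_nat:
  "prime p \<Longrightarrow> \<not> p dvd m \<Longrightarrow> p_integral p (frac (of_int a / of_nat m))"
  by (intro p_integral_frac p_integral_divide_of_nat)

theorem theorem2p1:
  fixes p m :: nat and r :: int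
  assumes "prime p" and "odd p" and "m > 0" and "\<not> p dvd m"
  shows "qcong (\<Sum>k\<in>{k\<in>{1..p-1}. [int k = r] (mod int m)}. 1 / of_nat k)
           ((1 / of_nat m) * (bernpoly (p - 1) (frac (of_int r / of_nat m))
                              - bernpoly (p - 1) (frac ((of_int r - of_nat p) / of_nat m)))) p"
proof -
  note p = \<open>prime p\<close> and pm = \<open>\<not> p dvd m\<close>
  have "p > 2"
    using prime_ge_2_nat[OF p] \<open>odd p\<close> by (cases "p = 2") auto
  define S where "S = {k\<in>{1..p-1}. [int k = r] (mod int m)}"
  define a where "a = frac (of_int r / of_nat m :: rat)"
  define b where "b = frac ((of_int r - of_nat p) / of_nat m :: rat)"
  define \<Delta> where "\<Delta> = bernpoly (p - 1) (b + of_nat p / of_nat m) - bernpoly (p - 1) a"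
  have power_sum: "of_nat (p - 1) * (\<Sum>k\<in>S. (of_nat k / of_nat m) ^ (p - 2)) = \<Delta>"
    using bernpoly_power_sum_residue_class_from_1[OF \<open>m > 0\<close>, of "p - 1" p r] \<open>p > 2\<close>
    unfolding S_def \<Delta>_def a_def b_def by (simp add: numeral_2_eq_2)
  have "p_integral p a" "p_integral p b" "p_integral p (1 / of_nat m)"
    using p_integral_frac_divide_of_nat[OF p pm, of r] p_integral_frac_divide_of_nat[OF p pm, of "r - p"]
      p_integral_divide_of_nat[OF p pm, of 1]
    unfolding a_def b_def by simp_all
  have "qcong (\<Sum>k\<in>S. 1 / of_nat k) (\<Sum>k\<in>S. of_nat k ^ (p - 2)) p"
    by (intro qcong_sum qcong_inverse_power[OF p]) (auto simp: S_def dest: dvd_imp_le)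
  also have "(\<Sum>k\<in>S. of_nat k ^ (p - 2)) =
      (of_nat m :: rat) ^ (p - 2) * (\<Sum>k\<in>S. (of_nat k / of_nat m) ^ (p - 2))"
    using \<open>m > 0\<close> by (simp add: sum_distrib_left power_divide)
  also have "\<dots> = of_nat m ^ (p - 2) * (1 / of_nat (p - 1)) * \<Delta>"
    using \<open>p > 2\<close> by (simp flip: power_sum)
  also have "qcong \<dots> (1 / of_nat m * (- 1) * (bernpoly (p - 1) b - bernpoly (p - 1) a)) p"
    using qcong_add_multiple[OF \<open>p_integral p b\<close> \<open>p_integral p (1 / of_nat m)\<close>]
      \<open>p_integral p a\<close> \<open>p > 2\<close>
    unfolding \<Delta>_def
    by (intro qcong_mult qcong_sym[OF qcong_inverse_power[OF p pm]] qcong_inverse_pred[OF p]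
        qcong_bernpoly_diff[OF p] qcong_refl) simp_all
  finally show ?thesis
    unfolding S_def a_def b_def by (simp add: algebra_simps)
qed

end
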